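(* Let $d\ge1$ and let $\Phi$ be a Young function such that the limits $\lim_{t\to0^+}\frac{t\Phi'(t)}{\Phi(t)}$ and $\lim_{t\to\infty}\frac{t\Phi'(t)}{\Phi(t)}$ exist. If $1<q_{[\Phi]}\le p_{[\Phi]}<\infty$, then $$L^p(\mathbb R^d)\cap L^q(\mathbb R^d)\subseteq L^\Phi(\mathbb R^d)\subseteq L^p(\mathbb R^d)+L^q(\mathbb R^d)$$ for all $p\in(p_{[\Phi]},\infty)$ and $q\in(1,q_{[\Phi]})$.
   Context: A Young function is a convex function $\Phi:[0,\infty)\to[0,\infty)$ with $\Phi(0)=0$, $\Phi(t)>0$ for $t>0$, and $\lim_{t\to\infty}\Phi(t)=\infty$. $\Phi'$ denotes the right derivative of $\Phi$. The Lebesgue exponents of $\Phi$ are $p_\Phi=\sup_{t>0}\frac{t\Phi'(t)}{\Phi(t)}$ and $q_\Phi=\inf_{t>0}\frac{t\Phi'(t)}{\Phi(t)}$. Two Young functions $\Phi,\Psi$ are equivalent if there is $C\ge1$ with $C^{-1}\Psi(t)\le\Phi(t)\le C\Psi(t)$ for all $t\ge0$; $[\Phi]$ denotes the set of Young functions equivalent to $\Phi$, and $p_{[\Phi]}=\inf\{p_\Psi:\Psi\in[\Phi]\}$, $q_{[\Phi]}=\sup\{q_\Psi:\Psi\in[\Phi]\}$. For a measurable $f$ on $\mathbb R^d$, $\rho_\Phi(f)=\int_{\mathbb R^d}\Phi(|f(x)|)\,dx$, the Luxemburg norm is $\|f\|_{L^\Phi}=\inf\{\lambda>0:\rho_\Phi(f/\lambda)\le1\}$,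 and the Orlicz space $L^\Phi(\mathbb R^d)$ consists of (classes of) measurable $f$ with $\|f\|_{L^\Phi}<\infty$. $L^p+L^q$ is the set of sums $g+h$ with $g\in L^p$, $h\in L^q$. *)

theory Defs
  imports "HOL-Analysis.Analysis"
begin

text \<open>Young function (only its values on [0,\<infinity>) matter).\<close>
definition young_fun :: "(real \<Rightarrow> real) \<Rightarrow> bool" where
  "young_fun \<Phi> \<longleftrightarrow> convex_on {0..} \<Phi> \<and> \<Phi> 0 = 0 \<and> (\<forall>t>0. \<Phi> t > 0)
     \<and> filterlim \<Phi> at_top at_top"

definition rderiv :: "(real \<Rightarrow> real) \<Rightarrow> real \<Rightarrow> real" where
  "rderiv \<Phi> t = Lim (at_right 0) (\<lambda>h. (\<Phi> (t + h) - \<Phi> t) / h)"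

definition index_ratio :: "(real \<Rightarrow> real) \<Rightarrow> real \<Rightarrow> real" where
  "index_ratio \<Phi> t = t * rderiv \<Phi> t / \<Phi> t"

text \<open>Lebesgue exponents (as extended reals, since the sup may be infinite).\<close>
definition p_exp :: "(real \<Rightarrow> real) \<Rightarrow> ereal" where
  "p_exp \<Phi> = (SUP t\<in>{0<..}. ereal (index_ratio \<Phi> t))"

definition q_exp :: "(real \<Rightarrow> real) \<Rightarrow> ereal" where
  "q_exp \<Phi> = (INF t\<in>{0<..}. ereal (index_ratio \<Phi> t))"

definition young_equiv :: "(real \<Rightarrow> real) \<Rightarrow> (real \<Rightarrow> real) \<Rightarrow> bool" where
  "young_equiv \<Phi> \<Psi> \<longleftrightarrow> (\<exists>C\<ge>1. \<forall>t\<ge>0. \<Psi> t / C \<le> \<Phi> t \<and> \<Phi> t \<le> C * \<Psi> t)"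

definition young_class :: "(real \<Rightarrow> real) \<Rightarrow> (real \<Rightarrow> real) set" where
  "young_class \<Phi> = {\<Psi>. young_fun \<Psi> \<and> young_equiv \<Phi> \<Psi>}"

definition p_class :: "(real \<Rightarrow> real) \<Rightarrow> ereal" where
  "p_class \<Phi> = (INF \<Psi>\<in>young_class \<Phi>. p_exp \<Psi>)"

definition q_class :: "(real \<Rightarrow> real) \<Rightarrow> ereal" where
  "q_class \<Phi> = (SUP \<Psi>\<in>young_class \<Phi>. q_exp \<Psi>)"

definition modular :: "(real \<Rightarrow> real) \<Rightarrow> ('a::euclidean_space \<Rightarrow> real) \<Rightarrow> ennreal" where
  "modular \<Phi> f = (\<integral>\<^sup>+ x. ennreal (\<Phi> \<bar>f x\<bar>) \<partial>lebesgue)"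

definition luxemburg_norm :: "(real \<Rightarrow> real) \<Rightarrow> ('a::euclidean_space \<Rightarrow> real) \<Rightarrow> ennreal" where
  "luxemburg_norm \<Phi> f = (INF c\<in>{c::real. c > 0 \<and> modular \<Phi> (\<lambda>x. f x / c) \<le> 1}. ennreal c)"

definition orlicz_space :: "(real \<Rightarrow> real) \<Rightarrow> ('a::euclidean_space \<Rightarrow> real) set" where
  "orlicz_space \<Phi> = {f \<in> borel_measurable lebesgue. luxemburg_norm \<Phi> f < \<infinity>}"

definition Lp_space :: "real \<Rightarrow> ('a::euclidean_space \<Rightarrow> real) set" where
  "Lp_space p = {f \<in> borel_measurable lebesgue. (\<integral>\<^sup>+ x. ennreal (\<bar>f x\<bar> powr p) \<partial>lebesgue) < \<infinity>}"

definition Lp_sum :: "real \<Rightarrow> real \<Rightarrow> ('a::euclidean_space \<Rightarrow> real) set" where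
  "Lp_sum p q = {f. \<exists>g h. g \<in> Lp_space p \<and> h \<in> Lp_space q \<and> f = (\<lambda>x. g x + h x)}"

end

theory Submission
  imports Defs
begin

text \<open>
  If \<open>p_class \<Phi> < p\<close>, some Young function \<open>\<Psi>\<close> equivalent to \<open>\<Phi>\<close> satisfies
  \<open>t \<Psi>'(t) \<le> p \<Psi>(t)\<close>, so \<open>\<Psi>(t) / t\<^sup>p\<close> is nonincreasing; if \<open>q < q_class \<Phi>\<close>, another
  equivalent \<open>\<Psi>\<close> has \<open>\<Psi>(t) / t\<^sup>q\<close> nondecreasing. Comparing with \<open>t = 1\<close>, \<open>\<Phi>(t)\<close> is at
  most a multiple of \<open>t\<^sup>p + t\<^sup>q\<close>, at least a multiple of \<open>t\<^sup>p\<close> on \<open>[0, 1]\<close> and at least a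
  multiple of \<open>t\<^sup>q\<close> on \<open>[1, \<infinity>)\<close>. The upper bound gives \<open>L\<^sup>p \<inter> L\<^sup>q \<subseteq> L\<^sup>\<Phi>\<close>. Conversely,
  if the modular of \<open>f / c\<close> is at most 1, cutting \<open>f\<close> at height \<open>c\<close> puts the small part
  into \<open>L\<^sup>p\<close> and the large part into \<open>L\<^sup>q\<close>.
\<close>

lemma right_DERIV_neg_imp_nonincreasing:
  fixes f :: "real \<Rightarrow> real"
  assumes "a \<le> b" and "continuous_on {a..b} f"
    and "\<And>x. a \<le> x \<Longrightarrow> x < b \<Longrightarrow> \<exists>y. (f has_real_derivative y) (at x within {x<..}) \<and> y < 0"
  shows "f b \<le> f a"
proof (rule ccontr)
  assume "\<not> f b \<le> f a"
  define Z where "Z = {x \<in> {a..b}. f x \<le> f a}"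
  have "closed Z"
    unfolding Z_def using continuous_on_closed_Collect_le[OF assms(2) continuous_on_const] by simp
  moreover have "bounded Z"
    by (rule bounded_subset[OF bounded_closed_interval]) (auto simp: Z_def)
  ultimately have "compact Z"
    by (simp add: compact_eq_bounded_closed)
  moreover have "Z \<noteq> {}"
    using assms(1) by (auto simp: Z_def)
  ultimately obtain c where "c \<in> Z" and c_max: "\<forall>x\<in>Z. x \<le> c"
    using compact_attains_sup by blast
  then have "a \<le> c" "c < b" "f c \<le> f a"
    using \<open>\<not> f b \<le> f a\<close> by (auto simp: Z_def less_le)
  then obtain y where "(f has_real_derivative y) (at c within {c<..})" "y < 0"
    using assms(3) by blast
  then have "eventually (\<lambda>x. (f x - f c) / (x - c) < 0) (at_right c)"
    by (simp add: has_field_derivative_iff order_tendstoD(2))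
  moreover have "eventually (\<lambda>x. x \<in> {c<..<b}) (at_right c)"
    using \<open>c < b\<close> by (rule eventually_at_right_real)
  ultimately have "eventually (\<lambda>x. (f x - f c) / (x - c) < 0 \<and> x \<in> {c<..<b}) (at_right c)"
    by (rule eventually_conj)
  then obtain x where "(f x - f c) / (x - c) < 0" "c < x" "x < b"
    using eventually_happens'[OF trivial_limit_at_right_real] by auto
  then have "x \<in> Z"
    using \<open>a \<le> c\<close> \<open>f c \<le> f a\<close> by (simp add: Z_def divide_less_0_iff)
  then have "x \<le> c"
    using c_max by blast
  with \<open>c < x\<close> show False by simp
qed

lemma right_DERIV_nonpos_imp_nonincreasing:
  fixes f :: "real \<Rightarrow> real"
  assumes "a \<le> b" and "continuous_on {a..b} f"
    and "\<And>x. a \<le> x \<Longrightarrow> x < b \<Longrightarrow> \<exists>y. (f has_real_derivative y) (at x within {x<..}) \<and> y \<le> 0"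
  shows "f b \<le> f a"
proof (rule field_le_epsilon)
  fix e :: real
  assume "e > 0"
  define \<epsilon> where "\<epsilon> = e / (b - a + 1)"
  have "\<epsilon> > 0" using \<open>e > 0\<close> \<open>a \<le> b\<close> by (simp add: \<epsilon>_def)
  have "f b - \<epsilon> * b \<le> f a - \<epsilon> * a"
  proof (rule right_DERIV_neg_imp_nonincreasing[OF \<open>a \<le> b\<close>])
    show "continuous_on {a..b} (\<lambda>x. f x - \<epsilon> * x)"
      using assms(2) by (intro continuous_intros)
    fix x assume "a \<le> x" "x < b"
    then obtain y where "(f has_real_derivative y) (at x within {x<..})" "y \<le> 0"
      using assms(3) by blast
    then show "\<exists>y. ((\<lambda>x. f x - \<epsilon> * x) has_real_derivative y) (at x within {x<..}) \<and> y < 0"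
      using \<open>\<epsilon> > 0\<close> by (intro exI[of _ "y - \<epsilon>"]) (auto intro!: derivative_eq_intros)
  qed
  moreover have "\<epsilon> * (b - a) \<le> e"
    using \<open>e > 0\<close> \<open>a \<le> b\<close> by (simp add: \<epsilon>_def field_simps)
  ultimately show "f b \<le> f a + e" by (simp add: algebra_simps)
qed

lemma right_DERIV_nonneg_imp_nondecreasing:
  fixes f :: "real \<Rightarrow> real"
  assumes "a \<le> b" and "continuous_on {a..b} f"
    and "\<And>x. a \<le> x \<Longrightarrow> x < b \<Longrightarrow> \<exists>y. (f has_real_derivative y) (at x within {x<..}) \<and> y \<ge> 0"
  shows "f a \<le> f b"
proof -
  have "- f b \<le> - f a"
  proof (rule right_DERIV_nonpos_imp_nonincreasing[OF \<open>a \<le> b\<close>])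
    show "continuous_on {a..b} (\<lambda>x. - f x)"
      using assms(2) by (intro continuous_intros)
    fix x assume "a \<le> x" "x < b"
    then obtain y where "(f has_real_derivative y) (at x within {x<..})" "y \<ge> 0"
      using assms(3) by blast
    then show "\<exists>y. ((\<lambda>x. - f x) has_real_derivative y) (at x within {x<..}) \<and> y \<le> 0"
      by (intro exI[of _ "- y"]) (auto intro: DERIV_minus)
  qed
  then show ?thesis by simp
qed

lemma tendsto_rderiv_convex_on:
  fixes \<Phi> :: "real \<Rightarrow> real"
  assumes convex: "convex_on {s..} \<Phi>" and "s < t"
  shows "((\<lambda>y. (\<Phi> y - \<Phi> t) / (y - t)) \<longlongrightarrow> rderiv \<Phi> t) (at_right t)"
proof -
  define slope where "slope y = (\<Phi> y - \<Phi> t) / (y - t)" for y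
  have "slope a \<le> slope b" if "t < a" "a \<le> b" for a b
  proof (cases "a = b")
    case False
    with that convex_on_slope_le(1)[OF convex, of t b a] \<open>s < t\<close> show ?thesis
      by (simp add: slope_def) (smt (verit) minus_divide_divide minus_diff_eq)
  qed simp
  moreover have "(\<Phi> s - \<Phi> t) / (s - t) \<le> slope a" if "t < a" for a
    using that convex_on_slope_le[OF convex, of s a t] \<open>s < t\<close>
    by (simp add: slope_def) (smt (verit) minus_divide_divide minus_diff_eq)
  ultimately have "(slope \<longlongrightarrow> Inf (slope ` ({t<..} \<inter> UNIV))) (at_right t)"
    using Lim_right_bound[of UNIV t slope "(\<Phi> s - \<Phi> t) / (s - t)"] by simp
  moreover from this have "rderiv \<Phi> t = Inf (slope ` ({t<..} \<inter> UNIV))"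
    unfolding rderiv_def
    by (intro tendsto_Lim) (simp_all add: filterlim_at_right_to_0[of _ _ t] slope_def add.commute)
  ultimately show ?thesis by (simp add: slope_def[abs_def])
qed

lemma has_real_derivative_rderiv:
  fixes \<Phi> :: "real \<Rightarrow> real"
  assumes "convex_on {s..} \<Phi>" and "s < t"
  shows "(\<Phi> has_real_derivative rderiv \<Phi> t) (at t within {t<..})"
  using tendsto_rderiv_convex_on[OF assms] by (simp add: has_field_derivative_iff)

lemma has_real_derivative_mult_powr_rderiv:
  fixes \<Psi> :: "real \<Rightarrow> real"
  assumes "convex_on {0..} \<Psi>" and "t > 0"
  shows "((\<lambda>x. \<Psi> x * x powr (- s)) has_real_derivative
           t powr (- s) / t * (t * rderiv \<Psi> t - s * \<Psi> t)) (at t within {t<..})"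
proof (rule DERIV_cong)
  show "((\<lambda>x. \<Psi> x * x powr (- s)) has_real_derivative
      rderiv \<Psi> t * t powr (- s) + \<Psi> t * (- s * t powr (- s - 1))) (at t within {t<..})"
    using DERIV_mult[OF has_real_derivative_rderiv[OF assms]
        has_field_derivative_at_within[OF has_real_derivative_powr[OF \<open>t > 0\<close>, of "- s"]]]
    by (simp add: algebra_simps)
  show "rderiv \<Psi> t * t powr (- s) + \<Psi> t * (- s * t powr (- s - 1))
      = t powr (- s) / t * (t * rderiv \<Psi> t - s * \<Psi> t)"
    using \<open>t > 0\<close> by (simp add: powr_diff field_simps)
qed

lemma continuous_on_convex_on_pos:
  fixes \<Psi> :: "real \<Rightarrow> real"
  assumes "convex_on {0..} \<Psi>" and "0 < a"
  shows "continuous_on {a..b} \<Psi>"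
proof -
  have "continuous_on {0<..} \<Psi>"
    by (rule convex_on_continuous) (auto intro: convex_on_subset[OF assms(1)])
  then show ?thesis
    by (rule continuous_on_subset) (use assms(2) in auto)
qed

lemma mult_powr_antimono_if_rderiv_le:
  fixes \<Psi> :: "real \<Rightarrow> real"
  assumes "convex_on {0..} \<Psi>" and "\<And>t. t > 0 \<Longrightarrow> t * rderiv \<Psi> t \<le> s * \<Psi> t"
    and "0 < a" "a \<le> b"
  shows "\<Psi> b * b powr (- s) \<le> \<Psi> a * a powr (- s)"
proof (rule right_DERIV_nonpos_imp_nonincreasing[OF \<open>a \<le> b\<close>])
  show "continuous_on {a..b} (\<lambda>x. \<Psi> x * x powr (- s))"
    using assms by (intro continuous_intros continuous_on_convex_on_pos) auto
  fix t assume "a \<le> t" "t < b"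
  then have "t > 0" using \<open>0 < a\<close> by simp
  with assms(2) show "\<exists>D. ((\<lambda>x. \<Psi> x * x powr (- s)) has_real_derivative D) (at t within {t<..}) \<and> D \<le> 0"
    by (intro exI[of _ "t powr (- s) / t * (t * rderiv \<Psi> t - s * \<Psi> t)"] conjI
        has_real_derivative_mult_powr_rderiv[OF assms(1)] mult_nonneg_nonpos) auto
qed

lemma mult_powr_mono_if_rderiv_ge:
  fixes \<Psi> :: "real \<Rightarrow> real"
  assumes "convex_on {0..} \<Psi>" and "\<And>t. t > 0 \<Longrightarrow> r * \<Psi> t \<le> t * rderiv \<Psi> t"
    and "0 < a" "a \<le> b"
  shows "\<Psi> a * a powr (- r) \<le> \<Psi> b * b powr (- r)"
proof (rule right_DERIV_nonneg_imp_nondecreasing[OF \<open>a \<le> b\<close>])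
  show "continuous_on {a..b} (\<lambda>x. \<Psi> x * x powr (- r))"
    using assms by (intro continuous_intros continuous_on_convex_on_pos) auto
  fix t assume "a \<le> t" "t < b"
  then have "t > 0" using \<open>0 < a\<close> by simp
  with assms(2) show "\<exists>D. ((\<lambda>x. \<Psi> x * x powr (- r)) has_real_derivative D) (at t within {t<..}) \<and> D \<ge> 0"
    by (intro exI[of _ "t powr (- r) / t * (t * rderiv \<Psi> t - r * \<Psi> t)"] conjI
        has_real_derivative_mult_powr_rderiv[OF assms(1)]) auto
qed

lemma young_fun_nonneg: "young_fun \<Phi> \<Longrightarrow> t \<ge> 0 \<Longrightarrow> \<Phi> t \<ge> 0"
  by (cases "t = 0") (auto simp: young_fun_def intro: less_imp_le)

lemma young_fun_mono:
  assumes "young_fun \<Phi>" and "0 \<le> x" "x \<le> y"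
  shows "\<Phi> x \<le> \<Phi> y"
proof (cases "x = y")
  case False
  then have "y > 0" using assms by simp
  have "convex_on {0..y} \<Phi>"
    using assms(1) by (auto simp: young_fun_def intro: convex_on_subset)
  then have "\<Phi> x \<le> (\<Phi> y - \<Phi> 0) / (y - 0) * (x - 0) + \<Phi> 0"
    using assms by (intro convex_onD_Icc') auto
  also have "\<dots> = \<Phi> y * (x / y)" using assms(1) by (simp add: young_fun_def)
  also have "\<dots> \<le> \<Phi> y"
    using assms \<open>y > 0\<close> young_fun_nonneg[OF assms(1), of y]
    by (intro mult_left_le) auto
  finally show ?thesis .
qed simp

lemma borel_measurable_young_fun_abs [measurable (raw)]:
  assumes "young_fun \<Phi>" and "f \<in> borel_measurable M"
  shows "(\<lambda>x. \<Phi> \<bar>f x\<bar>) \<in> borel_measurable M"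
proof -
  have "mono (\<lambda>t. \<Phi> (max 0 t))"
    using young_fun_mono[OF assms(1)] by (intro monoI) (simp add: max_def)
  then have "(\<lambda>t. \<Phi> (max 0 t)) \<in> borel_measurable borel"
    by (rule borel_measurable_mono)
  from measurable_compose[OF borel_measurable_abs[OF assms(2)] this] show ?thesis
    by simp
qed

lemma young_fun_powr_bounds_if_rderiv_le:
  fixes \<Psi> :: "real \<Rightarrow> real"
  assumes "young_fun \<Psi>" and index: "\<And>t. t > 0 \<Longrightarrow> t * rderiv \<Psi> t \<le> s * \<Psi> t"
  shows "t \<ge> 1 \<Longrightarrow> \<Psi> t \<le> \<Psi> 1 * t powr s"
    and "0 \<le> t \<Longrightarrow> t \<le> 1 \<Longrightarrow> \<Psi> 1 * t powr s \<le> \<Psi> t"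
proof -
  have convex: "convex_on {0..} \<Psi>"
    using assms(1) by (simp add: young_fun_def)
  show "\<Psi> t \<le> \<Psi> 1 * t powr s" if "t \<ge> 1"
  proof -
    have "\<Psi> t * t powr (- s) \<le> \<Psi> 1"
      using mult_powr_antimono_if_rderiv_le[OF convex index, of 1 t] that by simp
    then show ?thesis
      using that by (simp add: powr_minus_divide divide_le_eq)
  qed
  show "\<Psi> 1 * t powr s \<le> \<Psi> t" if "0 \<le> t" "t \<le> 1"
  proof (cases "t = 0")
    case True
    then show ?thesis using assms(1) by (simp add: young_fun_def)
  next
    case False
    then have "\<Psi> 1 \<le> \<Psi> t * t powr (- s)"
      using mult_powr_antimono_if_rderiv_le[OF convex index, of t 1] that by simp
    then show ?thesis
      using that False by (simp add: powr_minus_divide le_divide_eq)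
  qed
qed

lemma young_fun_powr_bounds_if_rderiv_ge:
  fixes \<Psi> :: "real \<Rightarrow> real"
  assumes "young_fun \<Psi>" and index: "\<And>t. t > 0 \<Longrightarrow> r * \<Psi> t \<le> t * rderiv \<Psi> t"
  shows "0 \<le> t \<Longrightarrow> t \<le> 1 \<Longrightarrow> \<Psi> t \<le> \<Psi> 1 * t powr r"
    and "t \<ge> 1 \<Longrightarrow> \<Psi> 1 * t powr r \<le> \<Psi> t"
proof -
  have convex: "convex_on {0..} \<Psi>"
    using assms(1) by (simp add: young_fun_def)
  show "\<Psi> t \<le> \<Psi> 1 * t powr r" if "0 \<le> t" "t \<le> 1"
  proof (cases "t = 0")
    case True
    then show ?thesis using assms(1) by (simp add: young_fun_def)
  next
    case False
    then have "\<Psi> t * t powr (- r) \<le> \<Psi> 1"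
      using mult_powr_mono_if_rderiv_ge[OF convex index, of t 1] that by simp
    then show ?thesis
      using that False by (simp add: powr_minus_divide divide_le_eq)
  qed
  show "\<Psi> 1 * t powr r \<le> \<Psi> t" if "t \<ge> 1"
  proof -
    have "\<Psi> 1 \<le> \<Psi> t * t powr (- r)"
      using mult_powr_mono_if_rderiv_ge[OF convex index, of 1 t] that by simp
    then show ?thesis
      using that by (simp add: powr_minus_divide le_divide_eq)
  qed
qed

lemma young_equiv_powr_bounds:
  assumes "young_fun \<Psi>" and "young_equiv \<Phi> \<Psi>"
  obtains K where "K > 0"
    and "\<And>t x. t \<ge> 0 \<Longrightarrow> \<Psi> t \<le> \<Psi> 1 * x \<Longrightarrow> \<Phi> t \<le> K * x"
    and "\<And>t x. t \<ge> 0 \<Longrightarrow> \<Psi> 1 * x \<le> \<Psi> t \<Longrightarrow> x \<le> K * \<Phi> t"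
proof -
  obtain C where "C \<ge> 1" and equiv: "\<And>t. t \<ge> 0 \<Longrightarrow> \<Psi> t / C \<le> \<Phi> t \<and> \<Phi> t \<le> C * \<Psi> t"
    using assms(2) by (auto simp: young_equiv_def)
  have "\<Psi> 1 > 0"
    using assms(1) by (simp add: young_fun_def)
  define K where "K = C * (\<Psi> 1 + 1 / \<Psi> 1)"
  show ?thesis
  proof (rule that)
    show "K > 0"
      unfolding K_def using \<open>C \<ge> 1\<close> \<open>\<Psi> 1 > 0\<close> by (intro mult_pos_pos add_pos_pos) auto
    fix t x :: real
    assume "t \<ge> 0"
    show "\<Phi> t \<le> K * x" if "\<Psi> t \<le> \<Psi> 1 * x"
    proof -
      have "0 \<le> \<Psi> 1 * x"
        using young_fun_nonneg[OF assms(1) \<open>t \<ge> 0\<close>] that by (rule order_trans)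
      then have "x \<ge> 0"
        using \<open>\<Psi> 1 > 0\<close> by (simp add: zero_le_mult_iff)
      have "\<Phi> t \<le> C * \<Psi> t"
        using equiv[OF \<open>t \<ge> 0\<close>] by simp
      also have "\<dots> \<le> C * \<Psi> 1 * x"
        using mult_left_mono[OF that] \<open>C \<ge> 1\<close> by (simp add: mult.assoc)
      also have "\<dots> \<le> K * x"
        using \<open>x \<ge> 0\<close> \<open>C \<ge> 1\<close> \<open>\<Psi> 1 > 0\<close> by (intro mult_right_mono) (simp_all add: K_def)
      finally show ?thesis .
    qed
    show "x \<le> K * \<Phi> t" if "\<Psi> 1 * x \<le> \<Psi> t"
    proof -
      have "\<Phi> t \<ge> 0"
        using equiv[OF \<open>t \<ge> 0\<close>] young_fun_nonneg[OF assms(1) \<open>t \<ge> 0\<close>] \<open>C \<ge> 1\<close>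
        by (smt (verit) divide_nonneg_nonneg)
      have "\<Psi> 1 * x \<le> C * \<Phi> t"
        using that equiv[OF \<open>t \<ge> 0\<close>] \<open>C \<ge> 1\<close> by (simp add: divide_le_eq mult.commute)
      then have "x \<le> C / \<Psi> 1 * \<Phi> t"
        using \<open>\<Psi> 1 > 0\<close> by (simp add: field_simps)
      also have "\<dots> \<le> K * \<Phi> t"
        using \<open>\<Phi> t \<ge> 0\<close> \<open>C \<ge> 1\<close> \<open>\<Psi> 1 > 0\<close>
        by (intro mult_right_mono) (simp_all add: K_def field_simps)
      finally show ?thesis .
    qed
  qed
qed

lemma p_class_lessE:
  assumes "p_class \<Phi> < ereal p"
  obtains \<Psi> where "young_fun \<Psi>" "young_equiv \<Phi> \<Psi>"
    and "\<And>t. t > 0 \<Longrightarrow> t * rderiv \<Psi> t \<le> p * \<Psi> t"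
proof -
  obtain \<Psi> where \<Psi>: "\<Psi> \<in> young_class \<Phi>" "p_exp \<Psi> < ereal p"
    using assms unfolding p_class_def by (auto simp: INF_less_iff)
  then have "young_fun \<Psi>" by (simp add: young_class_def)
  moreover have "t * rderiv \<Psi> t \<le> p * \<Psi> t" if "t > 0" for t
  proof -
    have "ereal (index_ratio \<Psi> t) \<le> p_exp \<Psi>"
      unfolding p_exp_def using \<open>t > 0\<close> by (intro SUP_upper) auto
    then have "ereal (index_ratio \<Psi> t) < ereal p"
      using \<Psi>(2) by (rule le_less_trans)
    then have "index_ratio \<Psi> t < p" by simp
    with \<open>t > 0\<close> \<open>young_fun \<Psi>\<close> show ?thesis
      by (simp add: index_ratio_def young_fun_def pos_divide_less_eq)
  qed
  ultimately show ?thesis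
    using \<Psi>(1) that by (simp add: young_class_def)
qed

lemma q_class_greaterE:
  assumes "ereal q < q_class \<Phi>"
  obtains \<Psi> where "young_fun \<Psi>" "young_equiv \<Phi> \<Psi>"
    and "\<And>t. t > 0 \<Longrightarrow> q * \<Psi> t \<le> t * rderiv \<Psi> t"
proof -
  obtain \<Psi> where \<Psi>: "\<Psi> \<in> young_class \<Phi>" "ereal q < q_exp \<Psi>"
    using assms unfolding q_class_def by (auto simp: less_SUP_iff)
  then have "young_fun \<Psi>" by (simp add: young_class_def)
  moreover have "q * \<Psi> t \<le> t * rderiv \<Psi> t" if "t > 0" for t
  proof -
    have "q_exp \<Psi> \<le> ereal (index_ratio \<Psi> t)"
      unfolding q_exp_def using \<open>t > 0\<close> by (intro INF_lower) auto
    with \<Psi>(2) have "ereal q < ereal (index_ratio \<Psi> t)"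
      by (rule less_le_trans)
    then have "q < index_ratio \<Psi> t" by simp
    with \<open>t > 0\<close> \<open>young_fun \<Psi>\<close> show ?thesis
      by (simp add: index_ratio_def young_fun_def pos_less_divide_eq)
  qed
  ultimately show ?thesis
    using \<Psi>(1) that by (simp add: young_class_def)
qed

lemma p_class_less_imp_powr_bounds:
  assumes "p_class \<Phi> < ereal p"
  obtains C where "C > 0" "\<And>t. t \<ge> 1 \<Longrightarrow> \<Phi> t \<le> C * t powr p"
    and "\<And>t. 0 \<le> t \<Longrightarrow> t \<le> 1 \<Longrightarrow> t powr p \<le> C * \<Phi> t"
proof -
  obtain \<Psi> where "young_fun \<Psi>" "young_equiv \<Phi> \<Psi>"
    and index: "\<And>t. t > 0 \<Longrightarrow> t * rderiv \<Psi> t \<le> p * \<Psi> t"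
    using p_class_lessE[OF assms] by blast
  obtain C where "C > 0"
    and upper: "\<And>t x. t \<ge> 0 \<Longrightarrow> \<Psi> t \<le> \<Psi> 1 * x \<Longrightarrow> \<Phi> t \<le> C * x"
    and lower: "\<And>t x. t \<ge> 0 \<Longrightarrow> \<Psi> 1 * x \<le> \<Psi> t \<Longrightarrow> x \<le> C * \<Phi> t"
    using young_equiv_powr_bounds[OF \<open>young_fun \<Psi>\<close> \<open>young_equiv \<Phi> \<Psi>\<close>] by blast
  show ?thesis
  proof (rule that[OF \<open>C > 0\<close>])
    show "\<Phi> t \<le> C * t powr p" if "t \<ge> 1" for t
      using upper young_fun_powr_bounds_if_rderiv_le(1)[OF \<open>young_fun \<Psi>\<close> index that] that by simp
    show "t powr p \<le> C * \<Phi> t" if "0 \<le> t" "t \<le> 1" for t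
      using lower young_fun_powr_bounds_if_rderiv_le(2)[OF \<open>young_fun \<Psi>\<close> index that] that by simp
  qed
qed

lemma q_class_greater_imp_powr_bounds:
  assumes "ereal q < q_class \<Phi>"
  obtains C where "C > 0" "\<And>t. 0 \<le> t \<Longrightarrow> t \<le> 1 \<Longrightarrow> \<Phi> t \<le> C * t powr q"
    and "\<And>t. t \<ge> 1 \<Longrightarrow> t powr q \<le> C * \<Phi> t"
proof -
  obtain \<Psi> where "young_fun \<Psi>" "young_equiv \<Phi> \<Psi>"
    and index: "\<And>t. t > 0 \<Longrightarrow> q * \<Psi> t \<le> t * rderiv \<Psi> t"
    using q_class_greaterE[OF assms] by blast
  obtain C where "C > 0"
    and upper: "\<And>t x. t \<ge> 0 \<Longrightarrow> \<Psi> t \<le> \<Psi> 1 * x \<Longrightarrow> \<Phi> t \<le> C * x"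
    and lower: "\<And>t x. t \<ge> 0 \<Longrightarrow> \<Psi> 1 * x \<le> \<Psi> t \<Longrightarrow> x \<le> C * \<Phi> t"
    using young_equiv_powr_bounds[OF \<open>young_fun \<Psi>\<close> \<open>young_equiv \<Phi> \<Psi>\<close>] by blast
  show ?thesis
  proof (rule that[OF \<open>C > 0\<close>])
    show "\<Phi> t \<le> C * t powr q" if "0 \<le> t" "t \<le> 1" for t
      using upper young_fun_powr_bounds_if_rderiv_ge(1)[OF \<open>young_fun \<Psi>\<close> index that] that by simp
    show "t powr q \<le> C * \<Phi> t" if "t \<ge> 1" for t
      using lower young_fun_powr_bounds_if_rderiv_ge(2)[OF \<open>young_fun \<Psi>\<close> index that] that by simp
  qed
qed

lemma class_exponents_imp_powr_bounds:
  assumes "young_fun \<Phi>" and "p_class \<Phi> < ereal p" and "ereal q < q_class \<Phi>"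
  obtains C where "C > 0" and "\<And>t. t \<ge> 0 \<Longrightarrow> \<Phi> t \<le> C * (t powr p + t powr q)"
    and "\<And>t. 0 \<le> t \<Longrightarrow> t \<le> 1 \<Longrightarrow> t powr p \<le> C * \<Phi> t"
    and "\<And>t. t \<ge> 1 \<Longrightarrow> t powr q \<le> C * \<Phi> t"
proof -
  obtain Cp where "Cp > 0" and p_large: "\<And>t. t \<ge> 1 \<Longrightarrow> \<Phi> t \<le> Cp * t powr p"
    and p_small: "\<And>t. 0 \<le> t \<Longrightarrow> t \<le> 1 \<Longrightarrow> t powr p \<le> Cp * \<Phi> t"
    using p_class_less_imp_powr_bounds[OF assms(2)] by blast
  obtain Cq where "Cq > 0" and q_small: "\<And>t. 0 \<le> t \<Longrightarrow> t \<le> 1 \<Longrightarrow> \<Phi> t \<le> Cq * t powr q"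
    and q_large: "\<And>t. t \<ge> 1 \<Longrightarrow> t powr q \<le> Cq * \<Phi> t"
    using q_class_greater_imp_powr_bounds[OF assms(3)] by blast
  show ?thesis
  proof (rule that)
    show "Cp + Cq > 0"
      using \<open>Cp > 0\<close> \<open>Cq > 0\<close> by simp
    fix t :: real
    show "\<Phi> t \<le> (Cp + Cq) * (t powr p + t powr q)" if "t \<ge> 0"
    proof (cases "t \<le> 1")
      case True
      with that have "\<Phi> t \<le> Cq * t powr q" by (rule q_small)
      also have "\<dots> \<le> (Cp + Cq) * (t powr p + t powr q)"
        using \<open>Cp > 0\<close> \<open>Cq > 0\<close> by (intro mult_mono) auto
      finally show ?thesis .
    next
      case False
      then have "\<Phi> t \<le> Cp * t powr p" by (intro p_large) simp
      also have "\<dots> \<le> (Cp + Cq) * (t powr p + t powr q)"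
        using \<open>Cp > 0\<close> \<open>Cq > 0\<close> by (intro mult_mono) auto
      finally show ?thesis .
    qed
    show "t powr p \<le> (Cp + Cq) * \<Phi> t" if "0 \<le> t" "t \<le> 1"
      using p_small[OF that] young_fun_nonneg[OF assms(1) that(1)] \<open>Cq > 0\<close>
      by (smt (verit) mult_right_mono)
    show "t powr q \<le> (Cp + Cq) * \<Phi> t" if "t \<ge> 1"
      using q_large[OF that] young_fun_nonneg[OF assms(1), of t] that \<open>Cp > 0\<close>
      by (smt (verit) mult_right_mono)
  qed
qed

lemma orlicz_spaceI:
  assumes "f \<in> borel_measurable lebesgue" and "c > 0" and "modular \<Phi> (\<lambda>x. f x / c) \<le> 1"
  shows "f \<in> orlicz_space \<Phi>"
proof -
  have "luxemburg_norm \<Phi> f \<le> ennreal c"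
    unfolding luxemburg_norm_def using assms(2,3) by (intro INF_lower) auto
  also have "\<dots> < \<infinity>"
    by simp
  finally show ?thesis
    using assms(1) by (simp add: orlicz_space_def)
qed

lemma orlicz_spaceE:
  assumes "f \<in> orlicz_space \<Phi>"
  obtains c where "c > 0" and "modular \<Phi> (\<lambda>x. f x / c) \<le> 1"
proof -
  have "luxemburg_norm \<Phi> f \<noteq> \<infinity>"
    using assms unfolding orlicz_space_def by auto
  then have "{c::real. c > 0 \<and> modular \<Phi> (\<lambda>x. f x / c) \<le> 1} \<noteq> {}"
    unfolding luxemburg_norm_def by (metis INF_empty infinity_ennreal_def)
  with that show ?thesis by blast
qed

lemma Lp_inter_subset_orlicz_space:
  fixes \<Phi> :: "real \<Rightarrow> real"
  assumes "p \<ge> 1" "q \<ge> 1" "K \<ge> 0"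
    and bound: "\<And>t. t \<ge> 0 \<Longrightarrow> \<Phi> t \<le> K * (t powr p + t powr q)"
  shows "Lp_space p \<inter> Lp_space q \<subseteq> (orlicz_space \<Phi> :: ('a::euclidean_space \<Rightarrow> real) set)"
proof
  fix f :: "'a \<Rightarrow> real"
  let ?I = "\<lambda>r. \<integral>\<^sup>+ x. ennreal (\<bar>f x\<bar> powr r) \<partial>lebesgue"
  assume "f \<in> Lp_space p \<inter> Lp_space q"
  then have meas: "f \<in> borel_measurable lebesgue" and "?I p + ?I q < \<infinity>"
    by (auto simp: Lp_space_def)
  then obtain S where S: "?I p + ?I q = ennreal S" "S \<ge> 0"
    by (cases "?I p + ?I q" rule: ennreal_cases) auto
  define c where "c = 1 + K * S"
  have "c \<ge> 1" using \<open>K \<ge> 0\<close> \<open>S \<ge> 0\<close> by (simp add: c_def)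
  have scale: "(\<bar>f x\<bar> / c) powr r \<le> \<bar>f x\<bar> powr r / c" if "r \<ge> 1" for x r
  proof -
    have "c powr 1 \<le> c powr r" using that \<open>c \<ge> 1\<close> by (rule powr_mono)
    then show ?thesis using \<open>c \<ge> 1\<close> by (simp add: powr_divide divide_left_mono)
  qed
  have pointwise: "\<Phi> \<bar>f x / c\<bar> \<le> K / c * (\<bar>f x\<bar> powr p + \<bar>f x\<bar> powr q)" for x
  proof -
    have "\<Phi> \<bar>f x / c\<bar> \<le> K * ((\<bar>f x\<bar> / c) powr p + (\<bar>f x\<bar> / c) powr q)"
      using bound[of "\<bar>f x / c\<bar>"] \<open>c \<ge> 1\<close> by simp
    also have "\<dots> \<le> K * (\<bar>f x\<bar> powr p / c + \<bar>f x\<bar> powr q / c)"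
      using scale \<open>p \<ge> 1\<close> \<open>q \<ge> 1\<close> \<open>K \<ge> 0\<close> by (intro mult_left_mono add_mono) auto
    also have "\<dots> = K / c * (\<bar>f x\<bar> powr p + \<bar>f x\<bar> powr q)"
      by (simp add: algebra_simps)
    finally show ?thesis .
  qed
  have "modular \<Phi> (\<lambda>x. f x / c)
      \<le> (\<integral>\<^sup>+ x. ennreal (K / c) * (ennreal (\<bar>f x\<bar> powr p) + ennreal (\<bar>f x\<bar> powr q)) \<partial>lebesgue)"
    unfolding modular_def
  proof (rule nn_integral_mono)
    fix x
    have "ennreal (\<Phi> \<bar>f x / c\<bar>) \<le> ennreal (K / c * (\<bar>f x\<bar> powr p + \<bar>f x\<bar> powr q))"
      using pointwise by (rule ennreal_leI)
    also have "\<dots> = ennreal (K / c) * (ennreal (\<bar>f x\<bar> powr p) + ennreal (\<bar>f x\<bar> powr q))"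
      by (subst ennreal_mult') (use \<open>K \<ge> 0\<close> \<open>c \<ge> 1\<close> in auto)
    finally show "ennreal (\<Phi> \<bar>f x / c\<bar>)
        \<le> ennreal (K / c) * (ennreal (\<bar>f x\<bar> powr p) + ennreal (\<bar>f x\<bar> powr q))" .
  qed
  also have "\<dots> = ennreal (K / c) * ennreal S"
    using meas by (simp add: nn_integral_cmult nn_integral_add S(1)[symmetric])
  also have "\<dots> \<le> 1"
  proof -
    have "K * S \<le> c" by (simp add: c_def)
    then have "K / c * S \<le> 1"
      using \<open>c \<ge> 1\<close> by (simp add: pos_divide_le_eq)
    then show ?thesis
      using \<open>K \<ge> 0\<close> \<open>c \<ge> 1\<close> by (simp add: ennreal_mult'[symmetric])
  qed
  finally show "f \<in> orlicz_space \<Phi>"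
    using \<open>c \<ge> 1\<close> by (intro orlicz_spaceI[OF meas]) auto
qed

lemma Lp_space_if_powr_le_modular:
  fixes u f :: "'a::euclidean_space \<Rightarrow> real"
  assumes "young_fun \<Phi>" "M \<ge> 0" "u \<in> borel_measurable lebesgue" "f \<in> borel_measurable lebesgue"
    and "modular \<Phi> f < \<infinity>" and "\<And>x. \<bar>u x\<bar> powr r \<le> M * \<Phi> \<bar>f x\<bar>"
  shows "u \<in> Lp_space r"
proof -
  have "(\<integral>\<^sup>+ x. ennreal (\<bar>u x\<bar> powr r) \<partial>lebesgue) \<le> (\<integral>\<^sup>+ x. ennreal M * ennreal (\<Phi> \<bar>f x\<bar>) \<partial>lebesgue)"
    using assms(2,6) by (intro nn_integral_mono) (simp add: ennreal_mult'[symmetric] ennreal_leI)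
  also have "\<dots> = ennreal M * modular \<Phi> f"
    using assms(1,4) by (simp add: modular_def nn_integral_cmult)
  also have "\<dots> < \<infinity>"
    using assms(5) by (simp add: ennreal_mult_less_top)
  finally show ?thesis
    using assms(3) by (simp add: Lp_space_def)
qed

lemma orlicz_space_subset_Lp_sum:
  assumes "young_fun \<Phi>" "C > 0"
    and small: "\<And>t. 0 \<le> t \<Longrightarrow> t \<le> 1 \<Longrightarrow> t powr p \<le> C * \<Phi> t"
    and large: "\<And>t. t \<ge> 1 \<Longrightarrow> t powr q \<le> C * \<Phi> t"
  shows "(orlicz_space \<Phi> :: ('a::euclidean_space \<Rightarrow> real) set) \<subseteq> Lp_sum p q"
proof
  fix f :: "'a \<Rightarrow> real"
  assume f: "f \<in> orlicz_space \<Phi>"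
  then obtain c where "c > 0" and "modular \<Phi> (\<lambda>x. f x / c) \<le> 1"
    by (rule orlicz_spaceE)
  then have modular: "modular \<Phi> (\<lambda>x. f x / c) < \<infinity>"
    by (simp add: order.strict_trans1)
  have meas: "f \<in> borel_measurable lebesgue"
    using f by (simp add: orlicz_space_def)
  define g where "g x = (if \<bar>f x\<bar> \<le> c then f x else 0)" for x
  define h where "h x = (if \<bar>f x\<bar> \<le> c then 0 else f x)" for x
  have scale: "\<bar>f x\<bar> powr r = c powr r * \<bar>f x / c\<bar> powr r" for x r
    using \<open>c > 0\<close> by (simp add: powr_divide)
  have "g \<in> Lp_space p"
  proof (rule Lp_space_if_powr_le_modular[OF assms(1), of "c powr p * C"])
    show "\<bar>g x\<bar> powr p \<le> c powr p * C * \<Phi> \<bar>f x / c\<bar>" for x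
      using small[of "\<bar>f x / c\<bar>"] young_fun_nonneg[OF assms(1), of "\<bar>f x / c\<bar>"] \<open>c > 0\<close> \<open>C > 0\<close>
      by (auto simp: g_def scale)
  qed (use meas modular \<open>C > 0\<close> in \<open>simp_all add: g_def[abs_def]\<close>)
  moreover have "h \<in> Lp_space q"
  proof (rule Lp_space_if_powr_le_modular[OF assms(1), of "c powr q * C"])
    show "\<bar>h x\<bar> powr q \<le> c powr q * C * \<Phi> \<bar>f x / c\<bar>" for x
      using large[of "\<bar>f x / c\<bar>"] young_fun_nonneg[OF assms(1), of "\<bar>f x / c\<bar>"] \<open>c > 0\<close> \<open>C > 0\<close>
      by (auto simp: h_def scale)
  qed (use meas modular \<open>C > 0\<close> in \<open>simp_all add: h_def[abs_def]\<close>)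
  moreover have "f = (\<lambda>x. g x + h x)"
    by (auto simp: g_def h_def)
  ultimately show "f \<in> Lp_sum p q"
    unfolding Lp_sum_def by blast
qed

theorem mainTheorem13:
  fixes \<Phi> :: "real \<Rightarrow> real" and p q :: real
  assumes "young_fun \<Phi>"
    and "\<exists>L. (index_ratio \<Phi> \<longlongrightarrow> L) (at_right 0)"
    and "\<exists>L. (index_ratio \<Phi> \<longlongrightarrow> L) at_top"
    and "1 < q_class \<Phi>" and "q_class \<Phi> \<le> p_class \<Phi>" and "p_class \<Phi> < \<infinity>"
    and "p_class \<Phi> < ereal p"
    and "1 < q" and "ereal q < q_class \<Phi>"
  shows "Lp_space p \<inter> Lp_space q \<subseteq> (orlicz_space \<Phi> :: (real ^ 'n \<Rightarrow> real) set)
         \<and> (orlicz_space \<Phi> :: (real ^ 'n \<Rightarrow> real) set) \<subseteq> Lp_sum p q"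
  \<comment> \<open>Neither the limits of the index ratio nor the finiteness of \<open>p_class \<Phi>\<close> are needed.\<close>
proof -
  have "(1::ereal) < ereal p"
    using less_trans[OF less_le_trans[OF assms(4,5)] assms(7)] .
  then have "p > 1" by (simp add: one_ereal_def)
  obtain C where "C > 0" and upper: "\<And>t. t \<ge> 0 \<Longrightarrow> \<Phi> t \<le> C * (t powr p + t powr q)"
    and small: "\<And>t. 0 \<le> t \<Longrightarrow> t \<le> 1 \<Longrightarrow> t powr p \<le> C * \<Phi> t"
    and large: "\<And>t. t \<ge> 1 \<Longrightarrow> t powr q \<le> C * \<Phi> t"
    using class_exponents_imp_powr_bounds[OF assms(1,7,9)] by blast
  have "Lp_space p \<inter> Lp_space q \<subseteq> (orlicz_space \<Phi> :: (real ^ 'n \<Rightarrow> real) set)"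
    by (rule Lp_inter_subset_orlicz_space[OF _ _ _ upper])
      (use \<open>p > 1\<close> \<open>q > 1\<close> \<open>C > 0\<close> in auto)
  moreover have "(orlicz_space \<Phi> :: (real ^ 'n \<Rightarrow> real) set) \<subseteq> Lp_sum p q"
    by (rule orlicz_space_subset_Lp_sum[OF assms(1) \<open>C > 0\<close> small large])
  ultimately show ?thesis ..
qed

end
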